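(* Let $\mathfrak l$ be a real nilpotent Lie algebra with $\dim\mathfrak l=5$ and let $\mathfrak a=0$. If $\mathcal H^2_Q(\mathfrak l,\mathfrak a)_0\neq\emptyset$, then $\mathfrak l\cong\mathbb R^5$ or $\mathfrak l\cong\mathfrak g_{5,2}$.
   Context: $\mathfrak g_{5,2}$ has basis $X_1,X_2,X_3,Y,Z$ with $[X_1,X_2]=Y$, $[X_1,X_3]=Z$, other brackets of basis vectors zero; $\mathbb R^5$ is abelian. For a Lie algebra $\mathfrak l$: $\mathfrak l^1=\mathfrak l$, $\mathfrak l^{k+1}=[\mathfrak l,\mathfrak l^k]$, $\mathfrak z(\mathfrak l)$ the centre. For a pseudo-Euclidean space $\mathfrak a$ regarded as trivial $\mathfrak l$-module: $C^p(\mathfrak l,\mathfrak a)$ alternating $p$-linear maps with Chevalley–Eilenberg differential $d$, $C^p(\mathfrak l)=C^p(\mathfrak l,\mathbb R)$, $\langle\alpha\wedge\beta\rangle$ the wedge product followed by contraction with the inner product. $\mathcal Z^2_Q(\mathfrak l,\mathfrak a)=\{(\alpha,\gamma)\in C^2(\mathfrak l,\mathfrak a)\oplus C^3(\mathfrak l): d\alpha=0,d\gamma=\frac12\langle\alpha\wedge\alpha\rangle\}$; the group $C^1(\mathfrak l,\mathfrak a)\oplus C^2(\mathfrak l)$ with $(\tau_1,\sigma_1)*(\tau_2,\sigma_2)=(\tau_1+\tau_2,\sigma_1+\sigma_2+\frac12\langle\tau_1\wedge\tau_2\rangle)$ acts by $(\alpha,\gamma)(\tau,\sigma)=(\alpha+d\tau,\gamma+d\sigma+\langle(\alpha+\frac12d\tau)\wedge\tau\rangle)$;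 $\mathcal H^2_Q(\mathfrak l,\mathfrak a)$ is the orbit set (for $\mathfrak a=0$ it is $H^3(\mathfrak l)$). Admissibility (trivial $\mathfrak a$): with $\mathfrak l^{m+2}=0$, $\mathfrak l_{(0)}=\mathfrak z(\mathfrak l)$, $\mathfrak l_{(k)}=\mathfrak z(\mathfrak l)\cap\mathfrak l^{k+1}$ ($k\ge1$), a class $[\alpha,\gamma]$ is admissible iff for all $0\le k\le m$: $(A_k)$ whenever $L_0\in\mathfrak l_{(k)}$ and there are $A_0\in\mathfrak a$, $Z_0\in(\mathfrak l^{k+1})^*$ with $\alpha(L,L_0)=0$ and $\gamma(L,L_0,\cdot)=-\langle A_0,\alpha(L,\cdot)\rangle+\langle Z_0,[L,\cdot]\rangle$ on $\mathfrak l^{k+1}$ for all $L$, then $L_0=0$; $(B_k)$ $\alpha$ applied to the kernel of the bracket map $\mathfrak l\otimes\mathfrak l^{k+1}\to\mathfrak l$ is a nondegenerate subspace of $\mathfrak a$. A class $\varphi$ is decomposable if there are decompositions $\mathfrak a=\mathfrak a_1\oplus\mathfrak a_2$ (orthogonal, into nondegenerate subspaces) and $\mathfrak l=\mathfrak l_1\oplus\mathfrak l_2$ (Lie algebra direct sum), at least one non-trivial, and classes $\varphi_i\in\mathcal H^2_Q(\mathfrak l_i,\mathfrak a_i)$ with $\varphi=(q_1,j_1)^*\varphi_1+(q_2,j_2)^*\varphi_2$, where $q_i:\mathfrak l\to\mathfrak l_i$ are projections, $j_i:\mathfrak a_i\to\mathfrak a$ inclusions, and $(q,j)^*(\alpha,\gamma)=(j\circ\alpha\circ(q\times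 q),\gamma\circ(q\times q\times q))$ (sums taken on representatives componentwise). $\mathcal H^2_Q(\mathfrak l,\mathfrak a)_0$ is the set of admissible indecomposable classes. *)

theory Defs
  imports "HOL-Analysis.Analysis"
begin

definition lie_algebra :: "('a::real_vector \<Rightarrow> 'a \<Rightarrow> 'a) \<Rightarrow> bool" where
  "lie_algebra B \<longleftrightarrow>
     (\<forall>y. linear (\<lambda>x. B x y)) \<and> (\<forall>x. linear (B x)) \<and> (\<forall>x. B x x = 0) \<and>
     (\<forall>x y z. B x (B y z) + B y (B z x) + B z (B x y) = 0)"

text \<open>Lower central series: lcs B 1 = l, lcs B (k+1) = [l, lcs B k]; lcs B 0 = l by convention.\<close>
fun lcs :: "('a::real_vector \<Rightarrow> 'a \<Rightarrow> 'a) \<Rightarrow> nat \<Rightarrow> 'a set" where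
  "lcs B 0 = UNIV"
| "lcs B (Suc 0) = UNIV"
| "lcs B (Suc (Suc k)) = span {B x y | x y. y \<in> lcs B (Suc k)}"

definition nilpotent_lie :: "('a::real_vector \<Rightarrow> 'a \<Rightarrow> 'a) \<Rightarrow> bool" where
  "nilpotent_lie B \<longleftrightarrow> (\<exists>k. lcs B k = {0})"

definition centre :: "('a::real_vector \<Rightarrow> 'a \<Rightarrow> 'a) \<Rightarrow> 'a set" where
  "centre B = {z. \<forall>x. B x z = 0}"

definition lie_iso :: "('a::real_vector \<Rightarrow> 'a \<Rightarrow> 'a) \<Rightarrow> ('b::real_vector \<Rightarrow> 'b \<Rightarrow> 'b) \<Rightarrow> ('a \<Rightarrow> 'b) \<Rightarrow> bool" where
  "lie_iso B C f \<longleftrightarrow> linear f \<and> bij f \<and> (\<forall>x y. f (B x y) = C (f x) (f y))"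

text \<open>Abelian Lie algebra R^5 and g_{5,2} on real^5; basis X1,X2,X3,Y,Z = axis 0,..,axis 4.\<close>
definition abelian5 :: "real^5 \<Rightarrow> real^5 \<Rightarrow> real^5" where
  "abelian5 x y = 0"

definition g52 :: "real^5 \<Rightarrow> real^5 \<Rightarrow> real^5" where
  "g52 x y = (x$0 * y$1 - x$1 * y$0) *\<^sub>R axis 3 1 + (x$0 * y$2 - x$2 * y$0) *\<^sub>R axis 4 1"

definition lin_on :: "'a::real_vector set \<Rightarrow> ('a \<Rightarrow> real) \<Rightarrow> bool" where
  "lin_on S f \<longleftrightarrow> (\<forall>x\<in>S. \<forall>y\<in>S. \<forall>a b. f (a *\<^sub>R x + b *\<^sub>R y) = a * f x + b * f y)"

definition alt2_on :: "'a::real_vector set \<Rightarrow> ('a \<Rightarrow> 'a \<Rightarrow> real) \<Rightarrow> bool" where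
  "alt2_on S s \<longleftrightarrow> (\<forall>y\<in>S. lin_on S (\<lambda>x. s x y)) \<and> (\<forall>x\<in>S. lin_on S (s x)) \<and> (\<forall>x\<in>S. s x x = 0)"

definition alt3_on :: "'a::real_vector set \<Rightarrow> ('a \<Rightarrow> 'a \<Rightarrow> 'a \<Rightarrow> real) \<Rightarrow> bool" where
  "alt3_on S g \<longleftrightarrow>
     (\<forall>y\<in>S. \<forall>z\<in>S. lin_on S (\<lambda>x. g x y z)) \<and>
     (\<forall>x\<in>S. \<forall>z\<in>S. lin_on S (\<lambda>y. g x y z)) \<and>
     (\<forall>x\<in>S. \<forall>y\<in>S. lin_on S (g x y)) \<and>
     (\<forall>x\<in>S. \<forall>z\<in>S. g x x z = 0 \<and> g x z x = 0 \<and> g z x x = 0)"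

definition d2 :: "('a \<Rightarrow> 'a \<Rightarrow> 'a) \<Rightarrow> ('a \<Rightarrow> 'a \<Rightarrow> real) \<Rightarrow> 'a \<Rightarrow> 'a \<Rightarrow> 'a \<Rightarrow> real" where
  "d2 B s x0 x1 x2 = - s (B x0 x1) x2 + s (B x0 x2) x1 - s (B x1 x2) x0"

definition d3 :: "('a \<Rightarrow> 'a \<Rightarrow> 'a) \<Rightarrow> ('a \<Rightarrow> 'a \<Rightarrow> 'a \<Rightarrow> real) \<Rightarrow> 'a \<Rightarrow> 'a \<Rightarrow> 'a \<Rightarrow> 'a \<Rightarrow> real" where
  "d3 B g x0 x1 x2 x3 =
     - g (B x0 x1) x2 x3 + g (B x0 x2) x1 x3 - g (B x0 x3) x1 x2
     - g (B x1 x2) x0 x3 + g (B x1 x3) x0 x2 - g (B x2 x3) x0 x1"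

definition cocycle3_on :: "('a::real_vector \<Rightarrow> 'a \<Rightarrow> 'a) \<Rightarrow> 'a set \<Rightarrow> ('a \<Rightarrow> 'a \<Rightarrow> 'a \<Rightarrow> real) \<Rightarrow> bool" where
  "cocycle3_on B S g \<longleftrightarrow> alt3_on S g \<and>
     (\<forall>x0\<in>S. \<forall>x1\<in>S. \<forall>x2\<in>S. \<forall>x3\<in>S. d3 B g x0 x1 x2 x3 = 0)"

section \<open>H^2_Q(l,0) = H^3(l): orbits of (0,gamma) under gamma \<mapsto> gamma + d sigma\<close>

definition qclass :: "('a::real_vector \<Rightarrow> 'a \<Rightarrow> 'a) \<Rightarrow> ('a \<Rightarrow> 'a \<Rightarrow> 'a \<Rightarrow> real) \<Rightarrow> ('a \<Rightarrow> 'a \<Rightarrow> 'a \<Rightarrow> real) set" where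
  "qclass B g = {g'. \<exists>s. alt2_on UNIV s \<and> g' = (\<lambda>x y z. g x y z + d2 B s x y z)}"

definition HQ :: "('a::real_vector \<Rightarrow> 'a \<Rightarrow> 'a) \<Rightarrow> ('a \<Rightarrow> 'a \<Rightarrow> 'a \<Rightarrow> real) set set" where
  "HQ B = {qclass B g | g. cocycle3_on B UNIV g}"

text \<open>Admissibility for a = 0: condition (A_k) (alpha = 0, the A_0 term vanishes);
  condition (B_k) is automatic since the zero subspace of a = 0 is nondegenerate.
  Conditions for k > m are vacuous (there l_(k) = 0), so we quantify over all k.\<close>
definition admissible_rep :: "('a::real_vector \<Rightarrow> 'a \<Rightarrow> 'a) \<Rightarrow> ('a \<Rightarrow> 'a \<Rightarrow> 'a \<Rightarrow> real) \<Rightarrow> bool" where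
  "admissible_rep B g \<longleftrightarrow>
     (\<forall>k. \<forall>L0 \<in> centre B \<inter> lcs B (k+1).
        (\<exists>Z0. lin_on (lcs B (k+1)) Z0 \<and>
              (\<forall>L. \<forall>X\<in>lcs B (k+1). g L L0 X = Z0 (B L X))) \<longrightarrow> L0 = 0)"

definition lie_decomp :: "('a::real_vector \<Rightarrow> 'a \<Rightarrow> 'a) \<Rightarrow> 'a set \<Rightarrow> 'a set \<Rightarrow> bool" where
  "lie_decomp B l1 l2 \<longleftrightarrow> subspace l1 \<and> subspace l2 \<and> l1 \<inter> l2 = {0} \<and>
     (\<forall>x. \<exists>u\<in>l1. \<exists>v\<in>l2. x = u + v) \<and>
     (\<forall>x\<in>l1. \<forall>y\<in>l1. B x y \<in> l1) \<and> (\<forall>x\<in>l2. \<forall>y\<in>l2. B x y \<in> l2) \<and>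
     (\<forall>x\<in>l1. \<forall>y\<in>l2. B x y = 0)"

definition proj :: "'a::real_vector set \<Rightarrow> 'a set \<Rightarrow> 'a \<Rightarrow> 'a" where
  "proj S T x = (THE u. u \<in> S \<and> x - u \<in> T)"

text \<open>For a = 0 the decomposition of a is necessarily trivial, so the decomposition of l
  must be non-trivial (both summands nonzero).\<close>
definition decomposable :: "('a::real_vector \<Rightarrow> 'a \<Rightarrow> 'a) \<Rightarrow> ('a \<Rightarrow> 'a \<Rightarrow> 'a \<Rightarrow> real) set \<Rightarrow> bool" where
  "decomposable B c \<longleftrightarrow>
     (\<exists>l1 l2 g1 g2. lie_decomp B l1 l2 \<and> l1 \<noteq> {0} \<and> l2 \<noteq> {0} \<and>
        cocycle3_on B l1 g1 \<and> cocycle3_on B l2 g2 \<and>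
        c = qclass B (\<lambda>x y z. g1 (proj l1 l2 x) (proj l1 l2 y) (proj l1 l2 z)
                             + g2 (proj l2 l1 x) (proj l2 l1 y) (proj l2 l1 z)))"

definition HQ0 :: "('a::real_vector \<Rightarrow> 'a \<Rightarrow> 'a) \<Rightarrow> ('a \<Rightarrow> 'a \<Rightarrow> 'a \<Rightarrow> real) set set" where
  "HQ0 B = {c \<in> HQ B. (\<exists>g. c = qclass B g \<and> admissible_rep B g) \<and> \<not> decomposable B c}"

end

theory Submission
  imports Defs
begin

text \<open>
  Admissibility concerns the last nonzero term \<open>\<Lambda>\<close> of the lower central series of \<open>l\<close>,
  which is central. Changing the representative by \<open>d\<sigma>\<close> does not affect \<open>\<gamma>(L, z, X)\<close> for
  central \<open>z, X\<close>, and admissibility forces \<open>\<gamma>(\<cdot>, z, \<cdot>)\<close> to be nonzero on \<open>l \<times> \<Lambda>\<close> for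
  every \<open>z \<noteq> 0\<close> in \<open>\<Lambda>\<close>. By alternation this is impossible if \<open>\<Lambda>\<close> is a line, so
  \<open>dim \<Lambda> \<ge> 2\<close>.

  The dimensions along the lower central series drop strictly, and \<open>[l,l]\<close> never has
  codimension one in a nonabelian nilpotent algebra. In dimension five this leaves, besides
  the abelian and the two-step case, only the dimensions \<open>(5, 3, 2, 0)\<close>. There \<open>l\<close> is spanned
  by \<open>a, b, w = [a,b], z\<^sub>1 = [a,w], z\<^sub>2 = [b,w]\<close>, and the cocycle identity gives
  \<open>\<gamma>(\<cdot>, z\<^sub>1, z\<^sub>2) = 0\<close>, contradicting admissibility.

  In the two-step case \<open>dim [l,l] \<ge> 2\<close> yields some \<open>x\<close> whose adjoint map has rank two, say
  with \<open>[x,u], [x,v]\<close> independent. Then \<open>x, u, v, [x,u], [x,v]\<close> is a basis, and after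
  correcting \<open>u\<close> and \<open>v\<close> by multiples of \<open>x\<close> it has the bracket relations of \<open>g_{5,2}\<close>.
\<close>

definition independent_pair :: "'a::real_vector \<Rightarrow> 'a \<Rightarrow> bool" where
  "independent_pair p q \<longleftrightarrow> (\<forall>\<alpha> \<beta>. \<alpha> *\<^sub>R p + \<beta> *\<^sub>R q = 0 \<longrightarrow> \<alpha> = 0 \<and> \<beta> = 0)"

lemma independent_pairD:
  "independent_pair p q \<Longrightarrow> \<alpha> *\<^sub>R p + \<beta> *\<^sub>R q = 0 \<Longrightarrow> \<alpha> = 0 \<and> \<beta> = 0"
  by (simp add: independent_pair_def)

lemma independent_pair_nonzero:
  assumes "independent_pair p q"
  shows "p \<noteq> 0" "q \<noteq> 0"
  using independent_pairD[OF assms, of 1 0] independent_pairD[OF assms, of 0 1] by auto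

lemma not_independent_pair_imp_multiple:
  assumes "\<not> independent_pair p q" and "p \<noteq> 0"
  obtains l where "q = l *\<^sub>R p"
proof -
  obtain \<alpha> \<beta> where rel: "\<alpha> *\<^sub>R p + \<beta> *\<^sub>R q = 0" and "\<alpha> \<noteq> 0 \<or> \<beta> \<noteq> 0"
    using assms(1) unfolding independent_pair_def by blast
  with assms(2) have "\<beta> \<noteq> 0" by auto
  have "q = (1 / \<beta>) *\<^sub>R (\<beta> *\<^sub>R q)"
    using \<open>\<beta> \<noteq> 0\<close> by simp
  also have "\<beta> *\<^sub>R q = - (\<alpha> *\<^sub>R p)"
    using rel by (simp add: eq_neg_iff_add_eq_0 add.commute)
  finally have "q = (- \<alpha> / \<beta>) *\<^sub>R p" by simp
  then show ?thesis by (rule that)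
qed

lemma exists_independent_pair:
  fixes S :: "'a::euclidean_space set"
  assumes "2 \<le> dim S"
  shows "\<exists>p\<in>S. \<exists>q\<in>S. independent_pair p q"
proof (rule ccontr)
  assume none: "\<not> ?thesis"
  have "dim S \<le> 1"
  proof (cases "S \<subseteq> {0}")
    case True
    then have "dim S = 0" by (simp add: dim_eq_0)
    then show ?thesis by linarith
  next
    case False
    then obtain p where p: "p \<in> S" "p \<noteq> 0" by blast
    have "S \<subseteq> span {p}"
    proof
      fix q assume "q \<in> S"
      then have "\<not> independent_pair p q" using none p(1) by blast
      then obtain l where "q = l *\<^sub>R p"
        using p(2) by (rule not_independent_pair_imp_multiple)
      then show "q \<in> span {p}" by (simp add: span_base span_scale)
    qed
    then show ?thesis using dim_le_card[of S "{p}"] by simp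
  qed
  then show False using assms by simp
qed

definition lincomb5 :: "'a \<Rightarrow> 'a \<Rightarrow> 'a \<Rightarrow> 'a \<Rightarrow> 'a \<Rightarrow> real^5 \<Rightarrow> 'a::real_vector" where
  "lincomb5 e0 e1 e2 e3 e4 c = c$0 *\<^sub>R e0 + c$1 *\<^sub>R e1 + c$2 *\<^sub>R e2 + c$3 *\<^sub>R e3 + c$4 *\<^sub>R e4"

lemma exhaust_5:
  fixes i :: 5
  shows "i = 0 \<or> i = 1 \<or> i = 2 \<or> i = 3 \<or> i = 4"
proof (induct i)
  case (of_int z)
  then have "z = 0 \<or> z = 1 \<or> z = 2 \<or> z = 3 \<or> z = 4" by fastforce
  then show ?case by auto
qed

lemma linear_lincomb5: "linear (lincomb5 e0 e1 e2 e3 e4)"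
  by (rule linearI) (simp_all add: lincomb5_def algebra_simps)

lemma bij_lincomb5:
  fixes e0 :: "'a::euclidean_space"
  assumes "DIM('a) = 5"
    and indep: "\<And>c. lincomb5 e0 e1 e2 e3 e4 c = 0 \<Longrightarrow>
      c$0 = 0 \<and> c$1 = 0 \<and> c$2 = 0 \<and> c$3 = 0 \<and> c$4 = 0"
  shows "bij (lincomb5 e0 e1 e2 e3 e4)"
proof -
  have inj: "inj (lincomb5 e0 e1 e2 e3 e4)"
    unfolding linear_injective_0[OF linear_lincomb5]
  proof (intro allI impI)
    fix c assume "lincomb5 e0 e1 e2 e3 e4 c = 0"
    then have "c$0 = 0 \<and> c$1 = 0 \<and> c$2 = 0 \<and> c$3 = 0 \<and> c$4 = 0" by (rule indep)
    then show "c = 0"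
      unfolding vec_eq_iff by (metis (full_types) exhaust_5 zero_index)
  qed
  moreover have "surj (lincomb5 e0 e1 e2 e3 e4)"
    using linear_injective_imp_surjective[OF linear_lincomb5 inj] assms(1) by simp
  ultimately show ?thesis by (rule bijI)
qed

lemma linear_iff_lin_on_UNIV:
  fixes f :: "'a::real_vector \<Rightarrow> real"
  shows "linear f \<longleftrightarrow> lin_on UNIV f"
proof
  assume "linear f"
  then show "lin_on UNIV f"
    by (simp add: lin_on_def linear_add linear_scale)
next
  assume f: "lin_on UNIV f"
  show "linear f"
  proof (rule linearI)
    show "f (x + y) = f x + f y" for x y
      using f[unfolded lin_on_def, rule_format, of x y 1 1] by simp
    show "f (c *\<^sub>R x) = c *\<^sub>R f x" for c x
      using f[unfolded lin_on_def, rule_format, of x 0 c 0] by simp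
  qed
qed

lemma lie_iso_inv:
  assumes "lie_iso C B h"
  shows "lie_iso B C (inv h)"
proof -
  have h: "linear h" "bij h" "\<And>x y. h (C x y) = B (h x) (h y)"
    using assms unfolding lie_iso_def by auto
  have h_inv: "h (inv h x) = x" for x
    using bij_is_surj[OF h(2)] by (rule surj_f_inv_f)
  have inv_h: "inv h (h x) = x" for x
    using bij_is_inj[OF h(2)] by (rule inv_f_f)
  have "linear (inv h)"
  proof (rule linearI)
    show "inv h (x + y) = inv h x + inv h y" for x y
      using inv_h[of "inv h x + inv h y"] by (simp add: linear_add[OF h(1)] h_inv)
    show "inv h (c *\<^sub>R x) = c *\<^sub>R inv h x" for c x
      using inv_h[of "c *\<^sub>R inv h x"] by (simp add: linear_scale[OF h(1)] h_inv)
  qed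
  moreover have "inv h (B x y) = C (inv h x) (inv h y)" for x y
    using inv_h[of "C (inv h x) (inv h y)"] by (simp add: h(3) h_inv)
  ultimately show ?thesis
    using h(2) unfolding lie_iso_def by (simp add: bij_imp_bij_inv)
qed

lemma lie_iso_abelian5:
  fixes B :: "'a::euclidean_space \<Rightarrow> 'a \<Rightarrow> 'a"
  assumes "DIM('a) = 5" and "\<And>x y. B x y = 0"
  shows "\<exists>f. lie_iso B abelian5 f"
proof -
  have "dim (UNIV :: 'a set) = dim (UNIV :: (real^5) set)"
    using assms(1) by simp
  then obtain f :: "'a \<Rightarrow> real^5" where f: "linear f" "f ` UNIV = UNIV" "inj f"
    using subspace_isomorphism[OF subspace_UNIV subspace_UNIV] by blast
  then have "lie_iso B abelian5 f"
    unfolding lie_iso_def by (simp add: assms(2) abelian5_def bij_def linear_0)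
  then show ?thesis by blast
qed

section \<open>The lower central series\<close>

lemma lcs_Suc: "0 < k \<Longrightarrow> lcs B (Suc k) = span {B x y | x y. y \<in> lcs B k}"
  by (cases k) simp_all

lemma subspace_lcs: "subspace (lcs B k)"
  by (induction B k rule: lcs.induct) (simp_all add: subspace_UNIV subspace_span)

lemma span_lcs [simp]: "span (lcs B k) = lcs B k"
  by (simp add: subspace_lcs)

lemma zero_mem_lcs [simp]: "0 \<in> lcs B k"
  by (rule subspace_0[OF subspace_lcs])

lemma bracket_mem_lcs: "y \<in> lcs B (Suc k) \<Longrightarrow> B x y \<in> lcs B (Suc (Suc k))"
  by (auto intro: span_base)

lemma lcs_subset_iff:
  assumes "subspace S"
  shows "lcs B (Suc (Suc k)) \<subseteq> S \<longleftrightarrow> (\<forall>x. \<forall>y \<in> lcs B (Suc k). B x y \<in> S)"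
proof
  assume "lcs B (Suc (Suc k)) \<subseteq> S"
  then show "\<forall>x. \<forall>y \<in> lcs B (Suc k). B x y \<in> S"
    using bracket_mem_lcs by blast
next
  assume "\<forall>x. \<forall>y \<in> lcs B (Suc k). B x y \<in> S"
  then have "{B x y | x y. y \<in> lcs B (Suc k)} \<subseteq> S" by blast
  then show "lcs B (Suc (Suc k)) \<subseteq> S"
    using span_minimal[OF _ assms] by simp
qed

lemma lcs_Suc_subset: "lcs B (Suc k) \<subseteq> lcs B k"
proof (induction B k rule: lcs.induct)
  case (3 B k)
  have "lcs B (Suc (Suc (Suc k))) = span {B x y | x y. y \<in> lcs B (Suc (Suc k))}"
    by simp
  also have "\<dots> \<subseteq> span {B x y | x y. y \<in> lcs B (Suc k)}"
    using "3" by (intro span_mono) blast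
  also have "\<dots> = lcs B (Suc (Suc k))"
    by simp
  finally show ?case .
qed simp_all

declare lcs.simps(3) [simp del]

lemma lcs_antimono: "i \<le> j \<Longrightarrow> lcs B j \<subseteq> lcs B i"
  by (rule lift_Suc_antimono_le[of "lcs B"]) (simp_all add: lcs_Suc_subset)

lemma lcs_eq_0_if_stable:
  assumes "nilpotent_lie B" and stable: "lcs B (Suc (Suc k)) = lcs B (Suc k)"
  shows "lcs B (Suc k) = {0}"
proof -
  have eq: "lcs B j = lcs B (Suc k)" if "Suc k \<le> j" for j
    using that
  proof (induction j rule: dec_induct)
    case (step j)
    then have "lcs B (Suc j) = span {B x y | x y. y \<in> lcs B (Suc k)}"
      by (simp add: lcs_Suc)
    also have "\<dots> = lcs B (Suc k)"
      using stable by (simp add: lcs.simps(3))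
    finally show ?case .
  qed simp
  obtain N where "lcs B N = {0}"
    using assms(1) unfolding nilpotent_lie_def by blast
  then have "lcs B (Suc (N + k)) = {0}"
    using lcs_antimono[of N "Suc (N + k)" B] by auto
  then show ?thesis
    using eq[of "Suc (N + k)"] by simp
qed

lemma dim_lcs_less:
  fixes B :: "'a::euclidean_space \<Rightarrow> 'a \<Rightarrow> 'a"
  assumes "nilpotent_lie B" and "lcs B (Suc k) \<noteq> {0}"
  shows "dim (lcs B (Suc (Suc k))) < dim (lcs B (Suc k))"
proof -
  have "lcs B (Suc (Suc k)) \<subset> lcs B (Suc k)"
    using lcs_Suc_subset[of B "Suc k"] lcs_eq_0_if_stable[OF assms(1)] assms(2) by auto
  then show ?thesis
    by (metis dim_psubset span_lcs)
qed

lemma dim_lcs_add_le: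
  fixes B :: "'a::euclidean_space \<Rightarrow> 'a \<Rightarrow> 'a"
  assumes "nilpotent_lie B" and "k \<le> j" and "lcs B (Suc j) \<noteq> {0}"
  shows "dim (lcs B (Suc j)) + (j - k) \<le> dim (lcs B (Suc k))"
  using assms(2,3)
proof (induction j rule: dec_induct)
  case (step j)
  have "lcs B (Suc j) \<noteq> {0}"
    using step.prems lcs_Suc_subset[of B "Suc j"] by auto
  then show ?case
    using step.IH dim_lcs_less[OF assms(1), of j] step.hyps by simp
qed simp

lemma exists_last_lcs:
  assumes "nilpotent_lie B" and "lcs B (Suc k) \<noteq> {0}"
  shows "\<exists>j \<ge> k. lcs B (Suc j) \<noteq> {0} \<and> lcs B (Suc (Suc j)) = {0}"
proof (rule ccontr)
  assume none: "\<not> ?thesis"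
  have nonzero: "lcs B (Suc j) \<noteq> {0}" if "k \<le> j" for j
    using that
  proof (induction j rule: dec_induct)
    case (step j)
    then show ?case using none by auto
  qed (rule assms(2))
  obtain N where "lcs B N = {0}"
    using assms(1) unfolding nilpotent_lie_def by blast
  then have "lcs B (Suc (N + k)) = {0}"
    using lcs_antimono[of N "Suc (N + k)" B] by auto
  then show False
    using nonzero[of "N + k"] by simp
qed

locale real_lie_algebra =
  fixes B :: "'a::euclidean_space \<Rightarrow> 'a \<Rightarrow> 'a"
  assumes lie_algebra: "lie_algebra B"
begin

lemma bilinear: "bilinear B"
  using lie_algebra unfolding lie_algebra_def bilinear_def by blast

lemmas bracket_simps [simp] =
  bilinear_ladd[OF bilinear] bilinear_radd[OF bilinear]
  bilinear_lmul[OF bilinear] bilinear_rmul[OF bilinear]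
  bilinear_lneg[OF bilinear] bilinear_rneg[OF bilinear]
  bilinear_lsub[OF bilinear] bilinear_rsub[OF bilinear]
  bilinear_lzero[OF bilinear] bilinear_rzero[OF bilinear]

lemma bracket_self [simp]: "B x x = 0"
  using lie_algebra unfolding lie_algebra_def by blast

lemma bracket_anticomm: "B x y = - B y x"
proof -
  have "B x y + B y x = B (x + y) (x + y)"
    by (simp del: bracket_self add: bracket_self[of x] bracket_self[of y])
  then show ?thesis by (simp add: eq_neg_iff_add_eq_0)
qed

lemma bracket_span:
  assumes "x \<in> span S" and "y \<in> span T"
  shows "B x y \<in> span {B s t | s t. s \<in> S \<and> t \<in> T}"
proof -
  let ?G = "span {B s t | s t. s \<in> S \<and> t \<in> T}"
  have sub: "subspace {x. B x y \<in> ?G}" "subspace {y. B x y \<in> ?G}" for x y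
    by (auto simp: subspace_def span_add span_scale span_zero)
  have "B s y \<in> ?G" if "s \<in> S" for s
    using span_minimal[OF _ sub(2), of T s] \<open>y \<in> span T\<close> that by (auto intro: span_base)
  then show ?thesis
    using span_minimal[OF _ sub(1), of S y] \<open>x \<in> span S\<close> by auto
qed

lemma last_lcs_central:
  assumes "lcs B (Suc (Suc k)) = {0}" and "z \<in> lcs B (Suc k)"
  shows "B x z = 0" "B z x = 0"
  using bracket_mem_lcs[OF assms(2), of x] assms(1) bracket_anticomm[of x z] by auto

lemma last_lcs_subset_centre:
  assumes "lcs B (Suc (Suc k)) = {0}"
  shows "lcs B (Suc k) \<subseteq> centre B"
  using last_lcs_central[OF assms] by (auto simp: centre_def)

lemma lcs_2_subset_lcs_3_if_codim_1:
  assumes spans: "span (insert x (lcs B 2)) = UNIV"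
  shows "lcs B 2 \<subseteq> lcs B 3"
proof -
  have L3: "B s t \<in> lcs B 3" if "t \<in> lcs B 2" for s t
    using bracket_mem_lcs[of t B 1 s] that by (simp add: eval_nat_numeral)
  have L3': "B s t \<in> lcs B 3" if "s \<in> lcs B 2" for s t
  proof -
    have "- B t s \<in> lcs B 3"
      using L3[OF that] by (rule subspace_neg[OF subspace_lcs])
    then show ?thesis by (simp add: bracket_anticomm[of s t])
  qed
  have gens: "{B s t | s t. s \<in> insert x (lcs B 2) \<and> t \<in> insert x (lcs B 2)} \<subseteq> lcs B 3"
  proof clarify
    fix s t
    assume "s \<in> insert x (lcs B 2)" and "t \<in> insert x (lcs B 2)"
    then consider "t \<in> lcs B 2" | "s \<in> lcs B 2" | "s = x" "t = x" by blast
    then show "B s t \<in> lcs B 3"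
      by cases (simp_all add: L3 L3')
  qed
  have "B p q \<in> lcs B 3" for p q
    using bracket_span[of p "insert x (lcs B 2)" q "insert x (lcs B 2)"] spans
      span_minimal[OF gens subspace_lcs] by auto
  then have "lcs B (Suc (Suc 0)) \<subseteq> lcs B 3"
    by (subst lcs_subset_iff[OF subspace_lcs]) simp
  then show ?thesis
    by (simp add: numeral_2_eq_2)
qed

lemma dim_lcs_2_le:
  assumes "nilpotent_lie B" and "lcs B 2 \<noteq> {0}"
  shows "dim (lcs B 2) + 2 \<le> DIM('a)"
proof (rule ccontr)
  assume "\<not> ?thesis"
  moreover have "lcs B (Suc 0) \<noteq> {0}"
    using assms(2) lcs_Suc_subset[of B 1] by auto
  then have "dim (lcs B 2) < DIM('a)"
    using dim_lcs_less[OF assms(1), of 0] by (simp add: numeral_2_eq_2)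
  ultimately have codim_1: "dim (lcs B 2) + 1 = DIM('a)" by simp
  have "lcs B 2 \<noteq> UNIV"
  proof
    assume "lcs B 2 = UNIV"
    with codim_1 show False by simp
  qed
  then obtain x where "x \<notin> lcs B 2" by blast
  then have "dim (insert x (lcs B 2)) = DIM('a)"
    using codim_1 by (simp add: dim_insert)
  then have "lcs B 2 \<subseteq> lcs B 3"
    by (intro lcs_2_subset_lcs_3_if_codim_1[of x]) (simp add: dim_eq_full)
  then have "lcs B (Suc (Suc 1)) = lcs B (Suc 1)"
    using lcs_Suc_subset[of B 2] by (simp add: eval_nat_numeral)
  then have "lcs B (Suc 1) = {0}"
    by (rule lcs_eq_0_if_stable[OF assms(1)])
  then show False
    using assms(2) by (simp add: numeral_2_eq_2)
qed

lemma exists_independent_brackets_common_factor: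
  assumes indep: "independent_pair (B a b) (B c d)"
  shows "\<exists>x u v. independent_pair (B x u) (B x v)"
proof (rule ccontr)
  txt \<open>If every adjoint map had rank at most one, then \<open>[a,d] = [c,b] = 0\<close>, and the
    adjoint map of \<open>a + c\<close> would have rank two after all.\<close>
  assume none: "\<not> ?thesis"
  have rank_1: "\<exists>l. B x v = l *\<^sub>R B x u" if "B x u \<noteq> 0" for x u v
    using none that by (metis not_independent_pair_imp_multiple)
  have ab: "B a b \<noteq> 0" and cd: "B c d \<noteq> 0"
    using independent_pair_nonzero[OF indep] by auto
  have zero_if_common: "B p q = 0" if "B p q = l *\<^sub>R B a b" and "B p q = m *\<^sub>R B c d" for p q l m
    using independent_pairD[OF indep, of l "- m"] that by auto
  have "B a d = 0"
  proof -
    obtain l where "B a d = l *\<^sub>R B a b" using rank_1 ab by blast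
    moreover obtain m where "B d a = m *\<^sub>R B d c"
      using rank_1[of d c] cd bracket_anticomm[of c d] by auto
    then have "B a d = m *\<^sub>R B c d"
      using bracket_anticomm[of a d] bracket_anticomm[of c d] by simp
    ultimately show ?thesis by (rule zero_if_common)
  qed
  moreover have "B c b = 0"
  proof -
    obtain l where "B b c = l *\<^sub>R B b a"
      using rank_1[of b a] ab bracket_anticomm[of a b] by auto
    then have "B c b = - (l *\<^sub>R B b a)"
      by (simp add: bracket_anticomm[of c b])
    also have "\<dots> = l *\<^sub>R B a b"
      by (simp add: bracket_anticomm[of b a])
    finally have "B c b = l *\<^sub>R B a b" .
    moreover obtain m where "B c b = m *\<^sub>R B c d" using rank_1 cd by blast
    ultimately show ?thesis by (rule zero_if_common)
  qed
  ultimately have "independent_pair (B (a + c) b) (B (a + c) d)"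
    using indep by simp
  with none show False by blast
qed

end

section \<open>Alternating forms and admissibility\<close>

locale alternating_trilinear =
  fixes g :: "'a::real_vector \<Rightarrow> 'a \<Rightarrow> 'a \<Rightarrow> real"
  assumes alt3: "alt3_on UNIV g"
begin

lemma linear_1: "linear (\<lambda>x. g x y z)"
  and linear_2: "linear (\<lambda>y. g x y z)"
  and linear_3: "linear (g x y)"
  using alt3 by (simp_all add: alt3_on_def linear_iff_lin_on_UNIV)

lemma add [simp]:
  "g (x + x') y z = g x y z + g x' y z"
  "g x (y + y') z = g x y z + g x y' z"
  "g x y (z + z') = g x y z + g x y z'"
  using linear_add[OF linear_1] linear_add[OF linear_2] linear_add[OF linear_3] by simp_all

lemma scale [simp]:
  "g (c *\<^sub>R x) y z = c * g x y z"
  "g x (c *\<^sub>R y) z = c * g x y z"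
  "g x y (c *\<^sub>R z) = c * g x y z"
  using linear_scale[OF linear_1] linear_scale[OF linear_2] linear_scale[OF linear_3] by simp_all

lemma zero [simp]: "g 0 y z = 0" "g x 0 z = 0" "g x y 0 = 0"
  using scale[where c = 0] by simp_all

lemma alternating [simp]: "g x x z = 0" "g x z x = 0" "g z x x = 0"
  using alt3 unfolding alt3_on_def by blast+

lemma swap_12: "g x y z = - g y x z"
proof -
  have "g (x + y) (x + y) z = g x y z + g y x z"
    by (simp only: add alternating(1)[of x z] alternating(1)[of y z])
  then show ?thesis
    using alternating(1)[of "x + y" z] by linarith
qed

lemma swap_23: "g x y z = - g x z y"
proof -
  have "g x (y + z) (y + z) = g x y z + g x z y"
    by (simp only: add alternating(3)[of x y] alternating(3)[of x z])
  then show ?thesis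
    using alternating(3)[of x "y + z"] by linarith
qed

end

text \<open>Condition \<open>(A\<^sub>k)\<close> at the last nonzero term \<open>l\<^sup>k\<^sup>+\<^sup>1\<close> of the lower central series: this
  term is central, so the bracket term \<open>\<langle>Z\<^sub>0, [L, \<cdot>]\<rangle>\<close> vanishes on it.\<close>

definition last_lcs_nondegenerate ::
    "('a::real_vector \<Rightarrow> 'a \<Rightarrow> 'a) \<Rightarrow> ('a \<Rightarrow> 'a \<Rightarrow> 'a \<Rightarrow> real) \<Rightarrow> bool" where
  "last_lcs_nondegenerate B g \<longleftrightarrow>
     (\<forall>k. lcs B (Suc (Suc k)) = {0} \<longrightarrow>
        (\<forall>z \<in> lcs B (Suc k). (\<forall>L. \<forall>X \<in> lcs B (Suc k). g L z X = 0) \<longrightarrow> z = 0))"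

lemma self_mem_qclass: "g \<in> qclass B g"
proof -
  have "alt2_on UNIV (\<lambda>_ _. 0)"
    by (simp add: alt2_on_def lin_on_def)
  then show ?thesis
    unfolding qclass_def by (auto simp: d2_def)
qed

lemma qclass_eq_on_centre:
  assumes "g' \<in> qclass B g" and "z \<in> centre B" and "X \<in> centre B"
  shows "g' L z X = g L z X"
proof -
  obtain s where s: "alt2_on UNIV s" and g': "g' = (\<lambda>x y z. g x y z + d2 B s x y z)"
    using assms(1) unfolding qclass_def by blast
  have "s 0 y = 0" for y
    using s unfolding alt2_on_def lin_on_def by (metis UNIV_I add_0 mult_zero_left scaleR_zero_left)
  then show ?thesis
    using assms(2,3) by (simp add: g' d2_def centre_def)
qed

lemma (in real_lie_algebra) last_lcs_nondegenerate_if_admissible: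
  assumes "admissible_rep B g" and "g' \<in> qclass B g"
  shows "last_lcs_nondegenerate B g'"
  unfolding last_lcs_nondegenerate_def
proof (intro allI impI ballI)
  fix k z
  assume last: "lcs B (Suc (Suc k)) = {0}" and z: "z \<in> lcs B (Suc k)"
    and vanish: "\<forall>L. \<forall>X \<in> lcs B (Suc k). g' L z X = 0"
  have central: "y \<in> centre B" if "y \<in> lcs B (Suc k)" for y
    using last_lcs_subset_centre[OF last] that by blast
  have "g L z X = 0" if "X \<in> lcs B (Suc k)" for L X
    using vanish that qclass_eq_on_centre[OF assms(2) central[OF z] central[OF that]] by simp
  moreover have "lin_on (lcs B (Suc k)) (\<lambda>_. 0)"
    by (simp add: lin_on_def)
  ultimately show "z = 0"
    using assms(1)[unfolded admissible_rep_def, rule_format, of z k] z central[OF z] by auto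
qed

locale lie_algebra_nondegenerate_cocycle = real_lie_algebra B
  for B :: "'a::euclidean_space \<Rightarrow> 'a \<Rightarrow> 'a" +
  fixes g :: "'a \<Rightarrow> 'a \<Rightarrow> 'a \<Rightarrow> real"
  assumes cocycle: "cocycle3_on B UNIV g"
    and nondegenerate: "last_lcs_nondegenerate B g"
begin

sublocale g: alternating_trilinear g
  using cocycle by unfold_locales (simp add: cocycle3_on_def)

lemma cocycle_identity: "d3 B g x0 x1 x2 x3 = 0"
  using cocycle unfolding cocycle3_on_def by blast

lemma eq_0_if_cocycle_vanishes:
  assumes last: "lcs B (Suc (Suc k)) = {0}" and z: "z \<in> lcs B (Suc k)"
    and spanned: "lcs B (Suc k) \<subseteq> span {z, w}" and vanish: "\<And>L. g L z w = 0"
  shows "z = 0"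
proof -
  have "g L z X = 0" if "X \<in> lcs B (Suc k)" for L X
  proof (rule linear_eq_0_on_span[OF g.linear_3])
    show "X \<in> span {z, w}"
      using spanned that by blast
  qed (use vanish in auto)
  then show ?thesis
    using nondegenerate last z unfolding last_lcs_nondegenerate_def by blast
qed

lemma dim_last_lcs_ge_2:
  assumes last: "lcs B (Suc (Suc k)) = {0}" and nonzero: "lcs B (Suc k) \<noteq> {0}"
  shows "2 \<le> dim (lcs B (Suc k))"
proof (rule ccontr)
  assume small: "\<not> ?thesis"
  obtain z where z: "z \<in> lcs B (Suc k)" "z \<noteq> 0"
    using nonzero zero_mem_lcs by blast
  then have "span {z} = lcs B (Suc k)"
    using small by (intro dim_eq_span[of "{z}" "lcs B (Suc k)", simplified]) auto
  then have "lcs B (Suc k) \<subseteq> span {z, z}" by simp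
  then have "z = 0"
    by (rule eq_0_if_cocycle_vanishes[OF last z(1)]) simp
  with z(2) show False ..
qed

lemma cocycle_vanishes_at_central_brackets:
  assumes w: "B a b = w" and z1: "B a w = z1" and z2: "B b w = z2"
    and central: "\<And>y. B y z1 = 0" "\<And>y. B y z2 = 0"
  shows "g a z1 z2 = 0" "g b z1 z2 = 0" "g w z1 z2 = 0"
proof -
  have central': "B z1 y = 0" "B z2 y = 0" for y
    using central bracket_anticomm[of z1 y] bracket_anticomm[of z2 y] by simp_all
  txt \<open>Since \<open>z\<^sub>1, z\<^sub>2\<close> are central, each instance of the cocycle identity below collapses
    to a single term.\<close>
  note collapse = d3_def w z1 z2 central central'
  show "g a z1 z2 = 0"
    using cocycle_identity[of a b w z1] g.swap_12[of z2 a z1] g.swap_23[of a z2 z1]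
    by (simp add: collapse)
  show "g b z1 z2 = 0"
    using cocycle_identity[of a b w z2] g.swap_12[of z1 b z2]
    by (simp add: collapse)
  show "g w z1 z2 = 0"
    using cocycle_identity[of a b z1 z2]
    by (simp add: collapse)
qed

end

section \<open>The two-step case\<close>

locale two_step_lie_algebra = real_lie_algebra B
  for B :: "'a::euclidean_space \<Rightarrow> 'a \<Rightarrow> 'a" +
  assumes two_step: "B x (B y z) = 0"
begin

lemma two_step_left: "B (B y z) x = 0"
  using two_step[of x y z] bracket_anticomm[of "B y z" x] by simp

lemma lincomb5_brackets_central_coeffs:
  assumes indep: "independent_pair (B x u) (B x v)"
    and central: "\<And>y. B y (lincomb5 x u v (B x u) (B x v) c) = 0"
  shows "c$0 = 0" "c$1 = 0" "c$2 = 0"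
proof -
  have "c$1 *\<^sub>R B x u + c$2 *\<^sub>R B x v = 0"
    using central[of x] by (simp add: lincomb5_def two_step)
  then show c12: "c$1 = 0" "c$2 = 0"
    using independent_pairD[OF indep] by blast+
  have "c$0 *\<^sub>R B x u = 0"
    using central[of u] c12 by (simp add: lincomb5_def two_step bracket_anticomm[of x u])
  then show "c$0 = 0"
    using independent_pair_nonzero(1)[OF indep] by simp
qed

lemma bij_lincomb5_brackets:
  assumes "DIM('a) = 5" and indep: "independent_pair (B x u) (B x v)"
  shows "bij (lincomb5 x u v (B x u) (B x v))"
proof (rule bij_lincomb5[OF assms(1)])
  fix c
  assume zero: "lincomb5 x u v (B x u) (B x v) c = 0"
  then have c012: "c$0 = 0" "c$1 = 0" "c$2 = 0"
    using lincomb5_brackets_central_coeffs[OF indep] by simp_all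
  then have "c$3 *\<^sub>R B x u + c$4 *\<^sub>R B x v = 0"
    using zero by (simp add: lincomb5_def)
  then show "c$0 = 0 \<and> c$1 = 0 \<and> c$2 = 0 \<and> c$3 = 0 \<and> c$4 = 0"
    using c012 independent_pairD[OF indep] by blast
qed

lemma lincomb5_brackets_g52:
  assumes "B u v = 0"
  shows "lincomb5 x u v (B x u) (B x v) (g52 c c') =
    B (lincomb5 x u v (B x u) (B x v) c) (lincomb5 x u v (B x u) (B x v) c')"
  using assms bracket_anticomm[of x u] bracket_anticomm[of x v] bracket_anticomm[of u v]
  by (simp add: lincomb5_def g52_def axis_def two_step two_step_left algebra_simps)

lemma lie_iso_g52_if_independent_brackets:
  assumes dim: "DIM('a) = 5" and indep: "independent_pair (B x u) (B x v)"
  shows "\<exists>f. lie_iso B g52 f"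
proof -
  obtain c where c: "B u v = lincomb5 x u v (B x u) (B x v) c"
    using bij_is_surj[OF bij_lincomb5_brackets[OF dim indep]] by (blast dest: surjD)
  moreover have "B y (B u v) = 0" for y
    by (rule two_step)
  ultimately have "c$0 = 0" "c$1 = 0" "c$2 = 0"
    using lincomb5_brackets_central_coeffs[OF indep] by simp_all
  then have uv: "B u v = c$3 *\<^sub>R B x u + c$4 *\<^sub>R B x v"
    using c by (simp add: lincomb5_def)
  define u' where "u' = u - c$4 *\<^sub>R x"
  define v' where "v' = v + c$3 *\<^sub>R x"
  have "B x u' = B x u" "B x v' = B x v"
    by (simp_all add: u'_def v'_def)
  then have indep': "independent_pair (B x u') (B x v')"
    using indep by simp
  have "B u' v' = 0"
    using uv by (simp add: u'_def v'_def bracket_anticomm[of u x] bracket_anticomm[of v x])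
  then have "lie_iso g52 B (lincomb5 x u' v' (B x u') (B x v'))"
    unfolding lie_iso_def
    using linear_lincomb5 bij_lincomb5_brackets[OF dim indep'] lincomb5_brackets_g52 by blast
  then show ?thesis
    using lie_iso_inv by blast
qed

end

section \<open>The three-step case\<close>

context real_lie_algebra
begin

lemma lcs_2_eq_span_insert:
  assumes w: "B a b \<notin> lcs B 3" and dims: "dim (lcs B 2) = dim (lcs B 3) + 1"
  shows "span (insert (B a b) (lcs B 3)) = lcs B 2"
proof -
  have "B a b \<in> lcs B 2"
    using bracket_mem_lcs[of b B 0 a] by (simp add: numeral_2_eq_2)
  then have "insert (B a b) (lcs B 3) \<subseteq> lcs B 2"
    using lcs_Suc_subset[of B 2] by simp
  moreover have "dim (lcs B 2) \<le> dim (insert (B a b) (lcs B 3))"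
    using w dims by (simp add: dim_insert)
  ultimately have "span (insert (B a b) (lcs B 3)) = span (lcs B 2)"
    by (rule dim_eq_span)
  then show ?thesis by simp
qed

lemma span_three_step_generators_eq_UNIV:
  assumes w: "B a b \<notin> lcs B 3"
    and L2: "span (insert (B a b) (lcs B 3)) = lcs B 2"
    and dims: "DIM('a) = dim (lcs B 2) + 2"
  shows "span (insert a (insert b (insert (B a b) (lcs B 3)))) = UNIV"
proof -
  let ?T = "insert (B a b) (lcs B 3)"
  have mem_3: "B x y \<in> lcs B 3" if "y \<in> lcs B 2" for x y
    using bracket_mem_lcs[of y B 1 x] that by (simp add: eval_nat_numeral)
  have a: "a \<notin> span ?T"
  proof
    assume "a \<in> span ?T"
    then have "B b a \<in> lcs B 3"
      using L2 mem_3 by simp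
    then have "- B b a \<in> lcs B 3"
      by (rule subspace_neg[OF subspace_lcs])
    with w show False
      by (simp add: bracket_anticomm[of a b])
  qed
  have b: "b \<notin> span (insert a ?T)"
  proof
    assume "b \<in> span (insert a ?T)"
    then obtain k where "b - k *\<^sub>R a \<in> lcs B 2"
      using L2 by (auto simp: span_breakdown_eq)
    then have "B a (b - k *\<^sub>R a) \<in> lcs B 3"
      by (rule mem_3)
    with w show False by simp
  qed
  have "dim (insert b (insert a ?T)) = DIM('a)"
    using a b dims L2 dim_span[of ?T] by (simp add: dim_insert)
  then show ?thesis
    by (simp add: dim_eq_full insert_commute[of a b])
qed

lemma lcs_3_subset_span_brackets:
  assumes L4: "lcs B 4 = {0}"
    and L2: "span (insert (B a b) (lcs B 3)) = lcs B 2"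
    and spans: "span (insert a (insert b (insert (B a b) (lcs B 3)))) = UNIV"
  shows "lcs B 3 \<subseteq> span {B a (B a b), B b (B a b)}"
proof -
  let ?w = "B a b" and ?S = "insert a (insert b (insert (B a b) (lcs B 3)))"
  let ?G = "{B s t | s t. s \<in> ?S \<and> t \<in> insert ?w (lcs B 3)}"
  have central: "B x y = 0" "B y x = 0" if "y \<in> lcs B 3" for x y
    using last_lcs_central[of 2 y x] that L4 by (simp_all add: eval_nat_numeral)
  have "?G \<subseteq> {0, B a ?w, B b ?w}"
  proof
    fix y
    assume "y \<in> ?G"
    then obtain s t where y: "y = B s t" and "s \<in> ?S" and "t \<in> insert ?w (lcs B 3)"
      by blast
    then consider "t \<in> lcs B 3" | "s \<in> lcs B 3" "t = ?w" | "s \<in> {a, b, ?w}" "t = ?w"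
      by blast
    then show "y \<in> {0, B a ?w, B b ?w}"
      by cases (auto simp: y central)
  qed
  then have "span ?G \<subseteq> span {0, B a ?w, B b ?w}"
    by (rule span_mono)
  then have gens: "span ?G \<subseteq> span {B a ?w, B b ?w}"
    by simp
  have "B x y \<in> span {B a ?w, B b ?w}" if "y \<in> lcs B (Suc 1)" for x y
  proof -
    have "y \<in> span (insert ?w (lcs B 3))"
      using L2 that by (simp add: numeral_2_eq_2)
    moreover have "x \<in> span ?S"
      using spans by simp
    ultimately have "B x y \<in> span ?G"
      by (rule bracket_span[rotated])
    with gens show ?thesis by blast
  qed
  then have "lcs B (Suc (Suc 1)) \<subseteq> span {B a ?w, B b ?w}"
    by (subst lcs_subset_iff[OF subspace_span]) blast
  then show ?thesis
    by (simp add: numeral_3_eq_3)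
qed

lemma three_step_generators:
  assumes "DIM('a) = 5" and L4: "lcs B 4 = {0}"
    and d2: "dim (lcs B 2) = 3" and d3: "dim (lcs B 3) = 2"
  obtains a b where "span {a, b, B a b, B a (B a b), B b (B a b)} = UNIV"
    and "lcs B 3 \<subseteq> span {B a (B a b), B b (B a b)}"
proof -
  have "\<exists>a b. B a b \<notin> lcs B 3"
  proof (rule ccontr)
    assume "\<not> ?thesis"
    then have "lcs B (Suc (Suc 0)) \<subseteq> lcs B 3"
      by (subst lcs_subset_iff[OF subspace_lcs]) auto
    then show False
      using dim_subset[of "lcs B (Suc (Suc 0))" "lcs B 3"] d2 d3 by (simp add: numeral_2_eq_2)
  qed
  then obtain a b where w: "B a b \<notin> lcs B 3" by blast
  let ?w = "B a b"
  have L2: "span (insert ?w (lcs B 3)) = lcs B 2"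
    using lcs_2_eq_span_insert[OF w] d2 d3 by simp
  have spans: "span (insert a (insert b (insert ?w (lcs B 3)))) = UNIV"
    using span_three_step_generators_eq_UNIV[OF w L2] assms(1) d2 by simp
  have L3: "lcs B 3 \<subseteq> span {B a ?w, B b ?w}"
    by (rule lcs_3_subset_span_brackets[OF L4 L2 spans])
  moreover have "span {B a ?w, B b ?w} \<subseteq> span {a, b, ?w, B a ?w, B b ?w}"
    by (rule span_mono) auto
  ultimately have "insert a (insert b (insert ?w (lcs B 3))) \<subseteq> span {a, b, ?w, B a ?w, B b ?w}"
    by (simp add: span_base)
  then have "span {a, b, ?w, B a ?w, B b ?w} = UNIV"
    using span_minimal[OF _ subspace_span] spans by blast
  then show thesis
    using L3 by (rule that)
qed

end

lemma (in lie_algebra_nondegenerate_cocycle) not_three_step_5: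
  assumes "DIM('a) = 5" and L4: "lcs B 4 = {0}"
    and "dim (lcs B 2) = 3" and d3: "dim (lcs B 3) = 2"
  shows False
proof -
  obtain a b where spans: "span {a, b, B a b, B a (B a b), B b (B a b)} = UNIV"
    and L3: "lcs B 3 \<subseteq> span {B a (B a b), B b (B a b)}"
    using three_step_generators[OF assms] by blast
  let ?w = "B a b"
  have z_mem: "B a ?w \<in> lcs B 3" "B b ?w \<in> lcs B 3"
    using bracket_mem_lcs[of ?w B 1] bracket_mem_lcs[of b B 0 a]
    by (simp_all add: eval_nat_numeral)
  have central: "B y (B a ?w) = 0" "B y (B b ?w) = 0" for y
    using last_lcs_central[of 2 _ y] z_mem L4 by (simp_all add: eval_nat_numeral)
  have "g L (B a ?w) (B b ?w) = 0" for L
  proof (rule linear_eq_0_on_span[OF g.linear_1])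
    show "L \<in> span {a, b, ?w, B a ?w, B b ?w}"
      using spans by simp
  qed (use cocycle_vanishes_at_central_brackets[OF refl refl refl central] in auto)
  then have "B a ?w = 0"
    using eq_0_if_cocycle_vanishes[of 2 "B a ?w" "B b ?w"] L3 z_mem L4
    by (simp add: eval_nat_numeral)
  then have "dim (lcs B 3) \<le> card {B b ?w}"
    using L3 by (intro dim_le_card) auto
  with d3 show False by simp
qed

locale nilpotent_lie_algebra_5 = lie_algebra_nondegenerate_cocycle B g
  for B :: "'a::euclidean_space \<Rightarrow> 'a \<Rightarrow> 'a" and g +
  assumes dim: "DIM('a) = 5" and nilpotent: "nilpotent_lie B"
begin

lemma lcs_3_eq_0: "lcs B 3 = {0}"
proof (rule ccontr)
  assume L3: "lcs B 3 \<noteq> {0}"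
  then obtain j where j: "2 \<le> j" "lcs B (Suc j) \<noteq> {0}" "lcs B (Suc (Suc j)) = {0}"
    using exists_last_lcs[OF nilpotent, of 2] by auto
  have L2: "lcs B 2 \<noteq> {0}"
    using L3 lcs_Suc_subset[of B 2] by auto
  have d2: "dim (lcs B 2) \<le> 3"
    using dim_lcs_2_le[OF nilpotent L2] dim by simp
  have last: "2 \<le> dim (lcs B (Suc j))"
    by (rule dim_last_lcs_ge_2[OF j(3,2)])
  moreover have "dim (lcs B (Suc j)) + (j - 1) \<le> dim (lcs B 2)"
    using dim_lcs_add_le[OF nilpotent, of 1 j] j by (simp add: numeral_2_eq_2)
  ultimately have "j = 2"
    using j(1) d2 by linarith
  then have L4: "lcs B 4 = {0}" and "2 \<le> dim (lcs B 3)"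
    using j(3) last by simp_all
  moreover have "dim (lcs B 3) < dim (lcs B 2)"
    using dim_lcs_less[OF nilpotent, of 1] L2 by (simp add: eval_nat_numeral)
  ultimately have "dim (lcs B 2) = 3" "dim (lcs B 3) = 2"
    using d2 by linarith+
  then show False
    by (rule not_three_step_5[OF dim L4])
qed

theorem classification: "(\<exists>f. lie_iso B abelian5 f) \<or> (\<exists>f. lie_iso B g52 f)"
proof (cases "lcs B 2 = {0}")
  case True
  then have "B x y = 0" for x y
    using bracket_mem_lcs[of y B 0 x] by (simp add: numeral_2_eq_2)
  then show ?thesis
    using lie_iso_abelian5[OF dim] by blast
next
  case False
  have "B x (B y z) = 0" for x y z
    using bracket_mem_lcs[of "B y z" B 1 x] bracket_mem_lcs[of z B 0 y] lcs_3_eq_0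
    by (simp add: eval_nat_numeral)
  then interpret two_step_lie_algebra B
    by unfold_locales
  have "2 \<le> dim (lcs B (Suc 1))"
    using dim_last_lcs_ge_2[of 1] lcs_3_eq_0 False by (simp add: eval_nat_numeral)
  then have "2 \<le> dim {B x y | x y. y \<in> lcs B 1}"
    by (simp add: lcs.simps(3))
  then obtain p q where "p \<in> {B x y | x y. y \<in> lcs B 1}" and "q \<in> {B x y | x y. y \<in> lcs B 1}"
    and "independent_pair p q"
    using exists_independent_pair by blast
  then obtain a b c d where "independent_pair (B a b) (B c d)"
    by blast
  then obtain x u v where "independent_pair (B x u) (B x v)"
    using exists_independent_brackets_common_factor by blast
  then show ?thesis
    using lie_iso_g52_if_independent_brackets[OF dim] by blast
qed

end

theorem proposition4:
  fixes B :: "'a::euclidean_space \<Rightarrow> 'a \<Rightarrow> 'a"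
  assumes "DIM('a) = 5"
    and "lie_algebra B"
    and "nilpotent_lie B"
    and "HQ0 B \<noteq> {}"
  shows "(\<exists>f. lie_iso B abelian5 f) \<or> (\<exists>f. lie_iso B g52 f)"
proof -
  interpret real_lie_algebra B
    by unfold_locales (rule assms(2))
  obtain c where "c \<in> HQ0 B"
    using assms(4) by blast
  then obtain g g' where g: "cocycle3_on B UNIV g" "c = qclass B g"
    and g': "admissible_rep B g'" "c = qclass B g'"
    unfolding HQ0_def HQ_def by blast
  then have "g \<in> qclass B g'"
    using self_mem_qclass[of g B] by simp
  with g'(1) have "last_lcs_nondegenerate B g"
    by (rule last_lcs_nondegenerate_if_admissible)
  then interpret nilpotent_lie_algebra_5 B g
    using assms(1,3) g(1) by unfold_locales
  show ?thesis
    by (rule classification)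
qed

end
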